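(* Let three binary classifiers $i,j,k$ be error independent on a test with $Q_a,Q_b\ge1$. Define from the observed frequencies $f_{b_i}=f_{baa}+f_{bab}+f_{bba}+f_{bbb}$, $f_{b_j}=f_{aba}+f_{abb}+f_{bba}+f_{bbb}$, $f_{b_k}=f_{aab}+f_{abb}+f_{bab}+f_{bbb}$, $\Delta_{i,j}=f_{bba}+f_{bbb}-f_{b_i}f_{b_j}$, $\Delta_{i,k}=f_{bab}+f_{bbb}-f_{b_i}f_{b_k}$, $\Delta_{j,k}=f_{abb}+f_{bbb}-f_{b_j}f_{b_k}$, $\Delta_{i,j,k}=f_{bbb}-\big(f_{b_i}f_{b_j}f_{b_k}+f_{b_i}\Delta_{j,k}+f_{b_j}\Delta_{i,k}+f_{b_k}\Delta_{i,j}\big)$. Set $\alpha=\Delta_{i,j,k}^2+4\Delta_{i,j}\Delta_{i,k}\Delta_{j,k}$ and $\gamma=\Delta_{i,j}\Delta_{i,k}\Delta_{j,k}$. Then the true prevalence $p_a$ satisfies $\alpha p_a^2-\alpha p_a+\gamma=0$; moreover, if $\alpha\neq 0$, the two roots of $\alpha x^2-\alpha x+\gamma$ are exactly $p_a$ and $p_b=1-p_a$.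
   Context: Test of $Q$ items with true labels $t_q\in\{a,b\}$; $Q_\ell=\#\{q:t_q=\ell\}$, $p_\ell=Q_\ell/Q$. Classifier $c\in\{i,j,k\}$ labels item $q$ with $\ell^q_c\in\{a,b\}$; label accuracy $p_{c,\ell}=\frac1{Q_\ell}\#\{q:\ell^q_c=\ell,t_q=\ell\}$. $f_{\ell_i\ell_j\ell_k}=\frac1Q\#\{q:\ell^q_i=\ell_i,\ell^q_j=\ell_j,\ell^q_k=\ell_k\}$. Pair error correlation $\Gamma_{c,d;\ell}=\frac1{Q_\ell}\sum_q(\mathbf 1[\ell^q_c=\ell]-p_{c,\ell})(\mathbf 1[\ell^q_d=\ell]-p_{d,\ell})\mathbf 1[t_q=\ell]$; 3-way error correlation $\Gamma_{i,j,k;\ell}=\frac1{Q_\ell}\sum_q\prod_{c\in\{i,j,k\}}(\mathbf 1[\ell^q_c=\ell]-p_{c,\ell})\,\mathbf 1[t_q=\ell]$. Error independence means all pair and 3-way correlations vanish for both labels $\ell\in\{a,b\}$. *)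

theory Defs
  imports Main Complex_Main
begin

datatype label = La | Lb

text \<open>A test of Q items indexed by 0..Q-1; t q is the true label of item q;
a classifier is a function c giving the label c q it assigns to item q.\<close>

definition Qn :: "nat \<Rightarrow> (nat \<Rightarrow> label) \<Rightarrow> label \<Rightarrow> nat" where
  "Qn Q t l = card {q. q < Q \<and> t q = l}"

definition prev :: "nat \<Rightarrow> (nat \<Rightarrow> label) \<Rightarrow> label \<Rightarrow> real" where
  "prev Q t l = real (Qn Q t l) / real Q"

definition acc :: "nat \<Rightarrow> (nat \<Rightarrow> label) \<Rightarrow> (nat \<Rightarrow> label) \<Rightarrow> label \<Rightarrow> real" where
  "acc Q t c l = real (card {q. q < Q \<and> c q = l \<and> t q = l}) / real (Qn Q t l)"

definition freq :: "nat \<Rightarrow> (nat \<Rightarrow> label) \<Rightarrow> (nat \<Rightarrow> label) \<Rightarrow> (nat \<Rightarrow> label)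
     \<Rightarrow> label \<Rightarrow> label \<Rightarrow> label \<Rightarrow> real" where
  "freq Q ci cj ck x y z =
     real (card {q. q < Q \<and> ci q = x \<and> cj q = y \<and> ck q = z}) / real Q"

definition ind :: "bool \<Rightarrow> real" where
  "ind P = (if P then 1 else 0)"

definition Gamma2 :: "nat \<Rightarrow> (nat \<Rightarrow> label) \<Rightarrow> (nat \<Rightarrow> label) \<Rightarrow> (nat \<Rightarrow> label) \<Rightarrow> label \<Rightarrow> real" where
  "Gamma2 Q t c d l = (1 / real (Qn Q t l)) *
     (\<Sum>q<Q. (ind (c q = l) - acc Q t c l) * (ind (d q = l) - acc Q t d l) * ind (t q = l))"

definition Gamma3 :: "nat \<Rightarrow> (nat \<Rightarrow> label) \<Rightarrow> (nat \<Rightarrow> label) \<Rightarrow> (nat \<Rightarrow> label)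
     \<Rightarrow> (nat \<Rightarrow> label) \<Rightarrow> label \<Rightarrow> real" where
  "Gamma3 Q t c d e l = (1 / real (Qn Q t l)) *
     (\<Sum>q<Q. (ind (c q = l) - acc Q t c l) * (ind (d q = l) - acc Q t d l)
              * (ind (e q = l) - acc Q t e l) * ind (t q = l))"

definition error_independent ::
  "nat \<Rightarrow> (nat \<Rightarrow> label) \<Rightarrow> (nat \<Rightarrow> label) \<Rightarrow> (nat \<Rightarrow> label) \<Rightarrow> (nat \<Rightarrow> label) \<Rightarrow> bool" where
  "error_independent Q t ci cj ck \<longleftrightarrow>
     (\<forall>l. Gamma2 Q t ci cj l = 0 \<and> Gamma2 Q t ci ck l = 0 \<and> Gamma2 Q t cj ck l = 0
          \<and> Gamma3 Q t ci cj ck l = 0)"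

end

theory Submission
  imports Defs
begin

text \<open>Error independence for a true label l makes the centred second and third mixed moments
of the three indicators "classifier c labels the item b" vanish on the items of true label l,
so the joint moments of these indicators factor into per-classifier rates: u_c on the a-items,
v_c on the b-items. Every observed b-frequency is then a two-component mixture
pa * prod u_c + pb * prod v_c, and a direct computation with pa + pb = 1 gives
Delta_cd = pa pb (u_c - v_c)(u_d - v_d) and Delta_ijk = pa pb (pb - pa) D, where
D = (u_i - v_i)(u_j - v_j)(u_k - v_k). Hence alpha = (pa pb D)^2 and gamma = alpha pa pb,
that is, alpha x^2 - alpha x + gamma = alpha (x - pa)(x - pb).\<close>

lemma real_card_eq_sum_ind: "real (card {q. q < (Q::nat) \<and> P q}) = (\<Sum>q<Q. ind (P q))"
proof (induction Q)
  case 0 then show ?case by simp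
next
  case (Suc n)
  have "{q. q < Suc n \<and> P q} = (if P n then insert n {q. q < n \<and> P q} else {q. q < n \<and> P q})"
    by (auto simp: less_Suc_eq)
  with Suc show ?case by (simp add: ind_def)
qed

lemma ind_conj: "ind (P \<and> R) = ind P * ind R"
  by (simp add: ind_def)

lemma ind_La_eq: "ind (l = La) = 1 - ind (l = Lb)"
  by (cases l) (simp_all add: ind_def)

lemma uncorrelated_pair_moment:
  fixes x y w :: "'a \<Rightarrow> real"
  assumes "(\<Sum>q\<in>S. w q) = N" "(\<Sum>q\<in>S. x q * w q) = N * u" "(\<Sum>q\<in>S. y q * w q) = N * v"
    and "(\<Sum>q\<in>S. (x q - u) * (y q - v) * w q) = 0"
  shows "(\<Sum>q\<in>S. x q * y q * w q) = N * u * v"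
proof -
  have "(\<Sum>q\<in>S. (x q - u) * (y q - v) * w q)
      = (\<Sum>q\<in>S. x q * y q * w q) - u * (\<Sum>q\<in>S. y q * w q) - v * (\<Sum>q\<in>S. x q * w q) + u * v * (\<Sum>q\<in>S. w q)"
    by (simp add: algebra_simps sum.distrib sum_subtractf sum_distrib_left)
  with assms show ?thesis by (simp add: algebra_simps)
qed

lemma uncorrelated_triple_moment:
  fixes x y z w :: "'a \<Rightarrow> real"
  assumes "(\<Sum>q\<in>S. w q) = N"
    and "(\<Sum>q\<in>S. x q * w q) = N * u" "(\<Sum>q\<in>S. y q * w q) = N * v" "(\<Sum>q\<in>S. z q * w q) = N * r"
    and "(\<Sum>q\<in>S. x q * y q * w q) = N * u * v" "(\<Sum>q\<in>S. x q * z q * w q) = N * u * r"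
    and "(\<Sum>q\<in>S. y q * z q * w q) = N * v * r"
    and "(\<Sum>q\<in>S. (x q - u) * (y q - v) * (z q - r) * w q) = 0"
  shows "(\<Sum>q\<in>S. x q * y q * z q * w q) = N * u * v * r"
proof -
  have "(\<Sum>q\<in>S. (x q - u) * (y q - v) * (z q - r) * w q)
      = (\<Sum>q\<in>S. x q * y q * z q * w q) - r * (\<Sum>q\<in>S. x q * y q * w q)
        - v * (\<Sum>q\<in>S. x q * z q * w q) - u * (\<Sum>q\<in>S. y q * z q * w q)
        + v * r * (\<Sum>q\<in>S. x q * w q) + u * r * (\<Sum>q\<in>S. y q * w q) + u * v * (\<Sum>q\<in>S. z q * w q)
        - u * v * r * (\<Sum>q\<in>S. w q)"
    by (simp add: algebra_simps sum.distrib sum_subtractf sum_distrib_left)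
  with assms show ?thesis by (simp add: algebra_simps)
qed

definition ind_Lb :: "(nat \<Rightarrow> label) \<Rightarrow> nat \<Rightarrow> real" where
  "ind_Lb c = (\<lambda>q. ind (c q = Lb))"

definition cond_mean :: "nat \<Rightarrow> (nat \<Rightarrow> label) \<Rightarrow> label \<Rightarrow> (nat \<Rightarrow> real) \<Rightarrow> real" where
  "cond_mean Q t l g = (\<Sum>q<Q. g q * ind (t q = l)) / real (Qn Q t l)"

lemma sum_ind_eq_Qn: "(\<Sum>q<Q. ind (t q = l)) = real (Qn Q t l)"
  by (simp add: Qn_def real_card_eq_sum_ind)

lemma sum_eq_Qn_cond_mean:
  "(\<Sum>q<Q. g q * ind (t q = l)) = real (Qn Q t l) * cond_mean Q t l g"
proof (cases "Qn Q t l = 0")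
  case True
  then have "\<forall>q<Q. t q \<noteq> l" by (auto simp: Qn_def)
  with True show ?thesis by (simp add: ind_def)
next
  case False
  then show ?thesis by (simp add: cond_mean_def)
qed

lemma acc_eq_cond_mean: "acc Q t c l = cond_mean Q t l (\<lambda>q. ind (c q = l))"
  by (simp add: acc_def cond_mean_def real_card_eq_sum_ind ind_conj)

lemma cond_mean_one_minus:
  assumes "Qn Q t l \<ge> 1"
  shows "cond_mean Q t l (\<lambda>q. 1 - g q) = 1 - cond_mean Q t l g"
  using assms
  by (simp add: cond_mean_def left_diff_distrib sum_subtractf sum_ind_eq_Qn diff_divide_distrib)

text \<open>On the a-items the centred indicator of "labelled a" is minus that of "labelled b", so error
independence at either true label is a statement about the b-indicators.\<close>

lemma centered_indicator_eq:
  assumes "Qn Q t l \<ge> 1"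
  shows "ind (c q = l) - acc Q t c l
    = (if l = Lb then 1 else -1) * (ind_Lb c q - cond_mean Q t l (ind_Lb c))"
proof (cases l)
  case La
  have "ind_Lb c = (\<lambda>q. 1 - ind (c q = La))"
    by (simp add: ind_Lb_def ind_La_eq)
  with La assms show ?thesis
    by (simp add: acc_eq_cond_mean cond_mean_one_minus)
next
  case Lb
  then show ?thesis by (simp add: acc_eq_cond_mean ind_Lb_def)
qed

lemma mean_eq_mixture:
  "(\<Sum>q<Q. g q) / real Q = prev Q t La * cond_mean Q t La g + prev Q t Lb * cond_mean Q t Lb g"
proof -
  have "(\<Sum>q<Q. g q) = (\<Sum>q<Q. g q * ind (t q = La)) + (\<Sum>q<Q. g q * ind (t q = Lb))"
    by (simp add: ind_La_eq algebra_simps sum_subtractf)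
  then show ?thesis
    by (simp add: sum_eq_Qn_cond_mean prev_def add_divide_distrib)
qed

lemma Gamma2_eq_centered:
  assumes "Qn Q t l \<ge> 1"
  shows "Gamma2 Q t c d l = (\<Sum>q<Q. (ind_Lb c q - cond_mean Q t l (ind_Lb c))
      * (ind_Lb d q - cond_mean Q t l (ind_Lb d)) * ind (t q = l)) / real (Qn Q t l)"
  using assms by (cases l) (simp_all add: Gamma2_def centered_indicator_eq algebra_simps)

lemma Gamma3_eq_centered:
  assumes "Qn Q t l \<ge> 1"
  shows "Gamma3 Q t c d e l = (if l = Lb then 1 else -1) * (\<Sum>q<Q. (ind_Lb c q - cond_mean Q t l (ind_Lb c))
      * (ind_Lb d q - cond_mean Q t l (ind_Lb d)) * (ind_Lb e q - cond_mean Q t l (ind_Lb e))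
      * ind (t q = l)) / real (Qn Q t l)"
  using assms by (cases l) (simp_all add: Gamma3_def centered_indicator_eq algebra_simps flip: sum_negf)

lemma error_independent_cond_mean_mult:
  assumes Ql: "Qn Q t l \<ge> 1" and indep: "error_independent Q t ci cj ck"
  defines "m \<equiv> cond_mean Q t l"
  shows "m (\<lambda>q. ind_Lb ci q * ind_Lb cj q) = m (ind_Lb ci) * m (ind_Lb cj)"
    and "m (\<lambda>q. ind_Lb ci q * ind_Lb ck q) = m (ind_Lb ci) * m (ind_Lb ck)"
    and "m (\<lambda>q. ind_Lb cj q * ind_Lb ck q) = m (ind_Lb cj) * m (ind_Lb ck)"
    and "m (\<lambda>q. ind_Lb ci q * ind_Lb cj q * ind_Lb ck q) = m (ind_Lb ci) * m (ind_Lb cj) * m (ind_Lb ck)"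
proof -
  define N where "N = real (Qn Q t l)"
  have "N \<noteq> 0" using Ql by (simp add: N_def)
  have sum_m: "\<And>g. (\<Sum>q<Q. g q * ind (t q = l)) = N * m g"
    by (simp add: N_def m_def sum_eq_Qn_cond_mean)
  have weights: "(\<Sum>q<Q. ind (t q = l)) = N"
    by (simp add: N_def sum_ind_eq_Qn)
  have pairs: "Gamma2 Q t ci cj l = 0" "Gamma2 Q t ci ck l = 0" "Gamma2 Q t cj ck l = 0"
    and triple: "Gamma3 Q t ci cj ck l = 0"
    using indep by (auto simp: error_independent_def)
  note centered = pairs[unfolded Gamma2_eq_centered[OF Ql]] triple[unfolded Gamma3_eq_centered[OF Ql]]
  have ij: "(\<Sum>q<Q. ind_Lb ci q * ind_Lb cj q * ind (t q = l)) = N * m (ind_Lb ci) * m (ind_Lb cj)"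
    by (rule uncorrelated_pair_moment[OF weights sum_m sum_m]) (use centered Ql in \<open>simp add: m_def\<close>)
  have ik: "(\<Sum>q<Q. ind_Lb ci q * ind_Lb ck q * ind (t q = l)) = N * m (ind_Lb ci) * m (ind_Lb ck)"
    by (rule uncorrelated_pair_moment[OF weights sum_m sum_m]) (use centered Ql in \<open>simp add: m_def\<close>)
  have jk: "(\<Sum>q<Q. ind_Lb cj q * ind_Lb ck q * ind (t q = l)) = N * m (ind_Lb cj) * m (ind_Lb ck)"
    by (rule uncorrelated_pair_moment[OF weights sum_m sum_m]) (use centered Ql in \<open>simp add: m_def\<close>)
  have ijk: "(\<Sum>q<Q. ind_Lb ci q * ind_Lb cj q * ind_Lb ck q * ind (t q = l))
      = N * m (ind_Lb ci) * m (ind_Lb cj) * m (ind_Lb ck)"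
    by (rule uncorrelated_triple_moment[OF weights sum_m sum_m sum_m ij ik jk])
      (use centered Ql in \<open>simp add: m_def split: if_splits\<close>)
  show "m (\<lambda>q. ind_Lb ci q * ind_Lb cj q) = m (ind_Lb ci) * m (ind_Lb cj)"
    using ij sum_m[of "\<lambda>q. ind_Lb ci q * ind_Lb cj q"] \<open>N \<noteq> 0\<close> by simp
  show "m (\<lambda>q. ind_Lb ci q * ind_Lb ck q) = m (ind_Lb ci) * m (ind_Lb ck)"
    using ik sum_m[of "\<lambda>q. ind_Lb ci q * ind_Lb ck q"] \<open>N \<noteq> 0\<close> by simp
  show "m (\<lambda>q. ind_Lb cj q * ind_Lb ck q) = m (ind_Lb cj) * m (ind_Lb ck)"
    using jk sum_m[of "\<lambda>q. ind_Lb cj q * ind_Lb ck q"] \<open>N \<noteq> 0\<close> by simp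
  show "m (\<lambda>q. ind_Lb ci q * ind_Lb cj q * ind_Lb ck q) = m (ind_Lb ci) * m (ind_Lb cj) * m (ind_Lb ck)"
    using ijk sum_m[of "\<lambda>q. ind_Lb ci q * ind_Lb cj q * ind_Lb ck q"] \<open>N \<noteq> 0\<close> by simp
qed

lemma prev_La_add_prev_Lb:
  assumes "Q > 0"
  shows "prev Q t La + prev Q t Lb = 1"
proof -
  have "real (Qn Q t La) + real (Qn Q t Lb) = real Q"
    by (simp flip: sum_ind_eq_Qn sum.distrib add: ind_La_eq)
  with assms show ?thesis by (simp add: prev_def flip: add_divide_distrib)
qed

lemma freq_eq_sum:
  "freq Q ci cj ck x y z = (\<Sum>q<Q. ind (ci q = x) * ind (cj q = y) * ind (ck q = z)) / real Q"
  by (simp add: freq_def real_card_eq_sum_ind ind_conj mult.assoc)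

lemma freq_Lb_marginals:
  fixes Q :: nat and ci cj ck :: "nat \<Rightarrow> label"
  defines "f \<equiv> freq Q ci cj ck"
  shows "f Lb La La + f Lb La Lb + f Lb Lb La + f Lb Lb Lb = (\<Sum>q<Q. ind_Lb ci q) / real Q"
    and "f La Lb La + f La Lb Lb + f Lb Lb La + f Lb Lb Lb = (\<Sum>q<Q. ind_Lb cj q) / real Q"
    and "f La La Lb + f La Lb Lb + f Lb La Lb + f Lb Lb Lb = (\<Sum>q<Q. ind_Lb ck q) / real Q"
    and "f Lb Lb La + f Lb Lb Lb = (\<Sum>q<Q. ind_Lb ci q * ind_Lb cj q) / real Q"
    and "f Lb La Lb + f Lb Lb Lb = (\<Sum>q<Q. ind_Lb ci q * ind_Lb ck q) / real Q"
    and "f La Lb Lb + f Lb Lb Lb = (\<Sum>q<Q. ind_Lb cj q * ind_Lb ck q) / real Q"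
    and "f Lb Lb Lb = (\<Sum>q<Q. ind_Lb ci q * ind_Lb cj q * ind_Lb ck q) / real Q"
  unfolding f_def freq_eq_sum
  by (simp_all add: ind_Lb_def ind_La_eq algebra_simps sum_subtractf flip: add_divide_distrib sum.distrib)

lemma mixture_gamma_eq_alpha_mult:
  fixes pa pb ui uj uk vi vj vk fbi fbj fbk fij fik fjk fijk :: real
  assumes "pa + pb = 1"
    and hi: "fbi = pa*ui + pb*vi" and hj: "fbj = pa*uj + pb*vj" and hk: "fbk = pa*uk + pb*vk"
    and hij: "fij = pa*ui*uj + pb*vi*vj" and hik: "fik = pa*ui*uk + pb*vi*vk"
    and hjk: "fjk = pa*uj*uk + pb*vj*vk" and hijk: "fijk = pa*ui*uj*uk + pb*vi*vj*vk"
  defines "Dij \<equiv> fij - fbi*fbj" and "Dik \<equiv> fik - fbi*fbk" and "Djk \<equiv> fjk - fbj*fbk"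
  defines "Dijk \<equiv> fijk - (fbi*fbj*fbk + fbi*Djk + fbj*Dik + fbk*Dij)"
  defines "\<alpha> \<equiv> Dijk\<^sup>2 + 4 * Dij * Dik * Djk" and "\<gamma> \<equiv> Dij * Dik * Djk"
  shows "\<gamma> = \<alpha> * pa * pb"
proof -
  define D where "D = (ui - vi) * (uj - vj) * (uk - vk)"
  have pb: "pb = 1 - pa" using \<open>pa + pb = 1\<close> by simp
  have eij: "Dij = pa*pb*(ui - vi)*(uj - vj)" unfolding Dij_def hij hi hj pb by algebra
  have eik: "Dik = pa*pb*(ui - vi)*(uk - vk)" unfolding Dik_def hik hi hk pb by algebra
  have ejk: "Djk = pa*pb*(uj - vj)*(uk - vk)" unfolding Djk_def hjk hj hk pb by algebra
  have "Dijk = pa*pb*(pb - pa)*D" unfolding Dijk_def eij eik ejk hijk hi hj hk D_def pb by algebra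
  then have "\<alpha> = (pa*pb*D)\<^sup>2" unfolding \<alpha>_def eij eik ejk D_def pb by algebra
  moreover have "\<gamma> = (pa*pb*D)\<^sup>2 * (pa*pb)" unfolding \<gamma>_def eij eik ejk D_def by algebra
  ultimately show ?thesis by simp
qed

theorem mainTheorem3:
  fixes Q :: nat and t ci cj ck :: "nat \<Rightarrow> label"
  assumes Qa: "Qn Q t La \<ge> 1" and Qb: "Qn Q t Lb \<ge> 1"
    and indep: "error_independent Q t ci cj ck"
  defines "f \<equiv> freq Q ci cj ck"
  defines "fbi \<equiv> f Lb La La + f Lb La Lb + f Lb Lb La + f Lb Lb Lb"
    and "fbj \<equiv> f La Lb La + f La Lb Lb + f Lb Lb La + f Lb Lb Lb"
    and "fbk \<equiv> f La La Lb + f La Lb Lb + f Lb La Lb + f Lb Lb Lb"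
  defines "Dij \<equiv> f Lb Lb La + f Lb Lb Lb - fbi * fbj"
    and "Dik \<equiv> f Lb La Lb + f Lb Lb Lb - fbi * fbk"
    and "Djk \<equiv> f La Lb Lb + f Lb Lb Lb - fbj * fbk"
  defines "Dijk \<equiv> f Lb Lb Lb - (fbi * fbj * fbk + fbi * Djk + fbj * Dik + fbk * Dij)"
  defines "\<alpha> \<equiv> Dijk\<^sup>2 + 4 * Dij * Dik * Djk"
    and "\<gamma> \<equiv> Dij * Dik * Djk"
  defines "pa \<equiv> prev Q t La" and "pb \<equiv> prev Q t Lb"
  shows "\<alpha> * pa\<^sup>2 - \<alpha> * pa + \<gamma> = 0 \<and>
         (\<alpha> \<noteq> 0 \<longrightarrow> {x::real. \<alpha> * x\<^sup>2 - \<alpha> * x + \<gamma> = 0} = {pa, pb})"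
proof -
  have "Q > 0" using Qa by (auto intro!: gr0I simp: Qn_def)
  then have prev_sum: "pa + pb = 1" by (simp add: pa_def pb_def prev_La_add_prev_Lb)
  define r where "r l c = cond_mean Q t l (ind_Lb c)" for l c
  have "fbi = pa * r La ci + pb * r Lb ci"
    and "fbj = pa * r La cj + pb * r Lb cj"
    and "fbk = pa * r La ck + pb * r Lb ck"
    and "f Lb Lb La + f Lb Lb Lb = pa * r La ci * r La cj + pb * r Lb ci * r Lb cj"
    and "f Lb La Lb + f Lb Lb Lb = pa * r La ci * r La ck + pb * r Lb ci * r Lb ck"
    and "f La Lb Lb + f Lb Lb Lb = pa * r La cj * r La ck + pb * r Lb cj * r Lb ck"
    and "f Lb Lb Lb = pa * r La ci * r La cj * r La ck + pb * r Lb ci * r Lb cj * r Lb ck"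
    using freq_Lb_marginals[of Q ci cj ck, folded f_def]
      error_independent_cond_mean_mult[OF Qa indep] error_independent_cond_mean_mult[OF Qb indep]
    by (simp_all add: fbi_def fbj_def fbk_def r_def mean_eq_mixture[of _ Q t] pa_def pb_def)
  then have "\<gamma> = \<alpha> * pa * pb"
    unfolding \<gamma>_def \<alpha>_def Dijk_def Dij_def Dik_def Djk_def
    by (rule mixture_gamma_eq_alpha_mult[OF prev_sum])
  then have "\<alpha> * x\<^sup>2 - \<alpha> * x + \<gamma> = \<alpha> * ((x - pa) * (x - pb))" for x
    using prev_sum by (simp add: power2_eq_square algebra_simps flip: distrib_left distrib_right)
  then show ?thesis by auto
qed

end
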